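(* Let $\mathcal Q$ be the set of infinite arrays $q^\infty=(q(b:\cdot))_{b\ge1}$ of coefficient families satisfying the backward recursions (BR) for all $b$ and having $q(2:1)>0$. For $q^\infty\in\mathcal Q$, let $p_{q^\infty}$ be the EPPF of the final partition $(E_n)_{n\ge1}$ associated with the consistent freeze-and-merge operators defined by $q^\infty$. Equivalently, $p_{q^\infty}$ is the EPPF of the exchangeable random partition of $\mathbb N$ satisfying Möhle's recursion with coefficients $q(n:\cdot)$ for all $n$. Then the map $q^\infty\mapsto p_{q^\infty}$ is injective on $\mathcal Q$, hence a bijection onto its image.
   Context: Coefficient families. $q(1:\cdot)=\{q(1:1)\}=\{1\}$. For $b\ge2$, a coefficient family $q(b:\cdot)$ is a collection of nonnegative reals consisting of: - a number $q(b:1)$; - a number $q(b:k_1,\dots,k_r;s)$ for each multiset $\{k_1,\dots,k_r\}$ with $r\ge1$, $k_i\ge2$, $s=b-\sum k_i\ge0$; such that all these numbers sum to $1$. Backward recursions (BR). The first recursion holds for all $b\ge2$, with $l_j=\#\{i:k_i=j\}$ and the $q(b+1:\dots,2;s-1)$ term read as $0$ if $s=0$: $$\begin{aligned}q(b:k_1,\dots,k_r;s)={}&\sum_{i=1}^r\frac{(k_i+1)(l_{k_i+1}+1)}{(b+1)l_{k_i}}q(b+1:k_1,\dots,k_i+1,\dots,k_r;s)+\frac{2(l_2+1)}{b+1}q(b+1:k_1,\dots,k_r,2;s-1)\\&+\frac{s+1}{b+1}q(b+1:k_1,\dots,k_r;s+1)+\frac{q(b+1:1)+2q(b+1:2;b-1)}{b+1}q(b:k_1,\dots,k_r;s).\end{aligned}$$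 The second recursion holds for all $b\ge1$: $$q(b:1)=\frac b{b+1}q(b+1:1)+\frac{q(b+1:1)+2q(b+1:2;b-1)}{b+1}q(b:1).$$ Partitions and EPPF. A partition of a finite set is an unordered collection of nonempty pairwise disjoint blocks with union the set. A composition of $m$ is a sequence of positive integers summing to $m$, and $\mathcal C_m$ is the set of compositions of $m$. An exchangeable random partition of $\mathbb N$ is a sequence $(\Pi_n)$ of random partitions $\Pi_n$ of $[n]=\{1,\dots,n\}$, each with law invariant under permutations of $[n]$, such that $\Pi_n$ restricted to $[m]$ equals $\Pi_m$. Its EPPF $p$ on $\bigcup_m\mathcal C_m$ is defined by $\mathbb P(\Pi_m=\{A_1,\dots,A_\ell\})=p(|A_1|,\dots,|A_\ell|)$. Collisions. For integers $b\ge2$, $r\ge1$, $k_1,\dots,k_r\ge2$, $s\ge0$ with $s+\sum k_i=b$, a $(b;k_1,\dots,k_r;s)$-collision of $b$ blocks leaves $s$ blocks unchanged and divides the others into $r$ unordered groups of $k_1,\dots,k_r$ blocks, each merged into one block. Their number is $d(b;k_1,\dots,k_r;s)=\frac{b!}{s!\prod_{j=2}^b(j!)^{l_j}l_j!}$. Freeze-and-merge operators. A partially frozen partition of $[m]$ is a partition of $[m]$ whose blocks are each labeled "active" or "frozen". $\Sigma^*_m$ is the all-singletons, all-active partition of $[m]$. $\mathrm{FM}_m$ acts on a partially frozen partition with $b$ active blocks as follows. If $b=0$, it does nothing. Otherwise: - with probability $q(b:k_1,\dots,k_r;s)$, a uniformly chosen one of the $d(b;k_1,\dots,k_r;s)$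 possible $(b;k_1,\dots,k_r;s)$-collisions of the active blocks is performed, the merged blocks being active; - with probability $q(b:1)$, a uniformly chosen active block is frozen. The $\mathrm{FM}_n$-chain started from $\Sigma^*_n$ a.s. ends in an all-frozen state, whose induced (unlabeled) partition is $E_n$. *)

theory Defs
  imports Complex_Main "HOL-Library.Multiset" "HOL-Library.Disjoint_Sets"
begin

text \<open>Indices of a coefficient family q(b:.): Freeze stands for q(b:1),
  Coll K stands for q(b:k_1,...,k_r;s) with K the multiset {k_1,...,k_r}
  and s = b - sum K.\<close>
datatype cidx = Freeze | Coll "nat multiset"

definition valid_idx :: "nat \<Rightarrow> cidx set" where
  "valid_idx b = (if b = 0 then {} else
     insert Freeze (Coll ` {K. K \<noteq> {#} \<and> (\<forall>k\<in>#K. 2 \<le> k) \<and> sum_mset K \<le> b}))"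

definition coeff_family :: "nat \<Rightarrow> (cidx \<Rightarrow> real) \<Rightarrow> bool" where
  "coeff_family b f \<longleftrightarrow>
     (\<forall>i. i \<notin> valid_idx b \<longrightarrow> f i = 0) \<and>
     (\<forall>i\<in>valid_idx b. 0 \<le> f i) \<and>
     (\<Sum>i\<in>valid_idx b. f i) = 1"

text \<open>First backward recursion at level b for the index (K; b - sum K).
  The sum over i = 1..r is the sum over the elements of K with multiplicity.\<close>
definition BR1 :: "(nat \<Rightarrow> cidx \<Rightarrow> real) \<Rightarrow> nat \<Rightarrow> nat multiset \<Rightarrow> bool" where
  "BR1 q b K \<longleftrightarrow>
    (let s = b - sum_mset K;
         c = (q (b+1) Freeze + 2 * q (b+1) (Coll {#2#})) / real (b+1)
     in q b (Coll K) =
          sum_mset (image_mset (\<lambda>k. real (k+1) * real (count K (k+1) + 1)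
                 / (real (b+1) * real (count K k))
                 * q (b+1) (Coll (add_mset (k+1) (K - {#k#})))) K)
        + (if s = 0 then 0
           else 2 * real (count K 2 + 1) / real (b+1) * q (b+1) (Coll (add_mset 2 K)))
        + real (s+1) / real (b+1) * q (b+1) (Coll K)
        + c * q b (Coll K))"

definition BR2 :: "(nat \<Rightarrow> cidx \<Rightarrow> real) \<Rightarrow> nat \<Rightarrow> bool" where
  "BR2 q b \<longleftrightarrow>
    q b Freeze = real b / real (b+1) * q (b+1) Freeze
      + (q (b+1) Freeze + 2 * q (b+1) (Coll {#2#})) / real (b+1) * q b Freeze"

text \<open>The set Q of arrays (q(b:.))_{b\<ge>1}; the unused level 0 is normalised to 0.\<close>
definition in_Q :: "(nat \<Rightarrow> cidx \<Rightarrow> real) \<Rightarrow> bool" where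
  "in_Q q \<longleftrightarrow>
     q 0 = (\<lambda>_. 0) \<and>
     (\<forall>b\<ge>1. coeff_family b (q b)) \<and>
     (\<forall>b\<ge>2. \<forall>K. Coll K \<in> valid_idx b \<longrightarrow> BR1 q b K) \<and>
     (\<forall>b\<ge>1. BR2 q b) \<and>
     q 2 Freeze > 0"

definition collisions :: "nat set set \<Rightarrow> nat multiset \<Rightarrow> nat set set set set" where
  "collisions A K = {G. G \<subseteq> Pow A \<and> (\<forall>g\<in>G. 2 \<le> card g) \<and> disjoint G \<and>
                        image_mset card (mset_set G) = K}"

definition collide :: "nat set set \<Rightarrow> nat set set set \<Rightarrow> nat set set" where
  "collide A G = (A - \<Union>G) \<union> (Union ` G)"

text \<open>fm_final n q A F P: probability that the FM chain started from the partially
  frozen partition with active blocks A and frozen blocks F is, after n steps,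
  in the all-frozen state with induced partition P.  Every non-trivial step
  decreases the number of active blocks, so n = card A steps reach absorption.\<close>
fun fm_final :: "nat \<Rightarrow> (nat \<Rightarrow> cidx \<Rightarrow> real) \<Rightarrow> nat set set \<Rightarrow> nat set set
                   \<Rightarrow> nat set set \<Rightarrow> real" where
  "fm_final 0 q A F P = (if A = {} \<and> F = P then 1 else 0)"
| "fm_final (Suc n) q A F P =
     (if A = {} then (if F = P then 1 else 0) else
      (let b = card A in
        (\<Sum>K\<in>{K. Coll K \<in> valid_idx b}.
            q b (Coll K) * (\<Sum>G\<in>collisions A K. fm_final n q (collide A G) F P)
              / real (card (collisions A K)))
      + q b Freeze * (\<Sum>B\<in>A. fm_final n q (A - {B}) (insert B F) P) / real b))"

definition prob_E :: "(nat \<Rightarrow> cidx \<Rightarrow> real) \<Rightarrow> nat \<Rightarrow> nat set set \<Rightarrow> real" where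
  "prob_E q n P = fm_final n q ((\<lambda>i. {i}) ` {1..n}) {} P"

definition comp_blocks :: "nat list \<Rightarrow> nat set set" where
  "comp_blocks c = set (map (\<lambda>j. {sum_list (take j c) + 1 .. sum_list (take (Suc j) c)})
                           [0..<length c])"

text \<open>EPPF of the final partition (E_n): p(c_1,...,c_l) = P(E_m = {A_1,...,A_l})
  with |A_j| = c_j (by exchangeability any such partition may be used).\<close>
definition eppf :: "(nat \<Rightarrow> cidx \<Rightarrow> real) \<Rightarrow> nat list \<Rightarrow> real" where
  "eppf q c = prob_E q (sum_list c) (comp_blocks c)"

definition compositions :: "nat list set" where
  "compositions = {c. \<forall>x\<in>set c. 0 < x}"

end

theory Submission
  imports Defs
begin

(* Let q1, q2 be two arrays in Q with the same EPPF.  We show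
   q1 b = q2 b by strong induction on b.  Conditioning the FM chain on its first
   step splits P(E_n = P) into a coefficient q(n:i) times the probability of
   ending in P after that step; because every step strictly decreases the number
   of active blocks, these after-step probabilities only involve the levels b < n,
   on which q1 and q2 agree by induction.  Equality of the EPPFs therefore gives a
   linear relation among the differences q1(n:i) - q2(n:i) for every partition P
   of [n] of the form comp_blocks c.  Testing it on the all-singletons partition
   isolates the freezing coefficient (no collision can end there); testing it on
   a partition whose non-singleton blocks have sizes K isolates q(n:K;s), once all
   collision types that merge fewer blocks are known (induction on sum K - size K).
   The isolating after-step probabilities are positive because freezing has
   positive probability at every level, which is where the backward recursion BR2
   and q(2:1) > 0 enter. *)

definition coll_types :: "nat \<Rightarrow> nat multiset set" where
  "coll_types b = {K. K \<noteq> {#} \<and> (\<forall>k\<in>#K. 2 \<le> k) \<and> sum_mset K \<le> b}"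

lemma coll_types_eq: "b \<noteq> 0 \<Longrightarrow> {K. Coll K \<in> valid_idx b} = coll_types b"
  by (auto simp: valid_idx_def coll_types_def)

lemma size_le_sum_mset: "\<forall>k\<in>#K. 1 \<le> k \<Longrightarrow> size K \<le> sum_mset (K::nat multiset)"
  by (induction K) auto

text \<open>A collision of type K merges sum K blocks into size K blocks, so it strictly
  decreases the number of blocks; this drives both the locality of the chain and
  the induction identifying the collision coefficients.\<close>
lemma size_less_sum_coll_type: "K \<in> coll_types b \<Longrightarrow> size K < sum_mset K"
proof -
  have "\<forall>k\<in>#K. 2 \<le> k \<Longrightarrow> K \<noteq> {#} \<Longrightarrow> size K < sum_mset K" for K :: "nat multiset"
  proof (induction K)
    case (add x K)
    thus ?case by (cases "K = {#}") fastforce+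
  qed simp
  thus "K \<in> coll_types b \<Longrightarrow> size K < sum_mset K" by (auto simp: coll_types_def)
qed

lemma finite_coll_types: "finite (coll_types b)"
proof (rule finite_subset)
  show "coll_types b \<subseteq> (\<Union>m\<in>{0..b}. multisets_of_size {0..b} m)"
  proof
    fix K assume K: "K \<in> coll_types b"
    hence sum: "sum_mset K \<le> b" and ge2: "\<forall>k\<in>#K. 2 \<le> k" by (auto simp: coll_types_def)
    have "size K \<le> sum_mset K" using ge2 by (intro size_le_sum_mset) auto
    moreover have "k \<le> b" if "k \<in># K" for k
      using that sum sum_mset.remove by fastforce
    ultimately show "K \<in> (\<Union>m\<in>{0..b}. multisets_of_size {0..b} m)"
      using sum by (auto simp: multisets_of_size_def)
  qed
qed auto

lemma finite_valid_idx: "finite (valid_idx b)"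
  using finite_coll_types[of b] by (auto simp: valid_idx_def coll_types_def)

lemma finite_collision_groups: "finite A \<Longrightarrow> G \<in> collisions A K \<Longrightarrow> finite G"
  unfolding collisions_def by (auto intro: finite_subset[of _ "Pow A"])

lemma finite_collisions: "finite A \<Longrightarrow> finite (collisions A K)"
  unfolding collisions_def by (rule finite_subset[of _ "Pow (Pow A)"]) auto

lemma finite_collide: "finite A \<Longrightarrow> G \<in> collisions A K \<Longrightarrow> finite (collide A G)"
  unfolding collide_def using finite_collision_groups by auto

lemma Union_collide: "\<Union>G \<subseteq> A \<Longrightarrow> \<Union>(collide A G) = \<Union>A"
  unfolding collide_def by auto

lemma card_collide:
  assumes A: "finite A" and G: "G \<in> collisions A K"
  shows "card (collide A G) + sum_mset K \<le> card A + size K"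
proof -
  have fin_G: "finite G" using finite_collision_groups[OF A G] .
  have GA: "G \<subseteq> Pow A" and disj: "disjoint G" and K: "image_mset card (mset_set G) = K"
    using G by (auto simp: collisions_def)
  have UA: "\<Union>G \<subseteq> A" using GA by auto
  have "card (\<Union>G) = sum card G"
    using card_Union_disjoint[OF disj] GA A by (auto intro: finite_subset)
  also have "\<dots> = sum_mset K" using K by (simp add: sum_unfold_sum_mset)
  finally have card_U: "card (\<Union>G) = sum_mset K" .
  have size_K: "size K = card G" using K[symmetric] fin_G by simp
  have "card (collide A G) \<le> card (A - \<Union>G) + card (Union ` G)"
    unfolding collide_def by (rule card_Un_le)
  moreover have "card (Union ` G) \<le> card G" using fin_G by (rule card_image_le)
  moreover have "card (A - \<Union>G) = card A - card (\<Union>G)"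
    using UA A by (simp add: card_Diff_subset finite_subset)
  moreover have "card (\<Union>G) \<le> card A" using UA A by (simp add: card_mono)
  ultimately show ?thesis using card_U size_K by linarith
qed

lemma size_le_sum_collision:
  assumes A: "finite A" and G: "G \<in> collisions A K"
  shows "size K \<le> sum_mset K"
proof (rule size_le_sum_mset)
  have "image_mset card (mset_set G) = K" "\<forall>g\<in>G. 2 \<le> card g"
    using G by (auto simp: collisions_def)
  thus "\<forall>k\<in>#K. 1 \<le> k" using finite_collision_groups[OF A G]
    by (auto, metis Suc_leD numeral_2_eq_2)
qed

section \<open>The freeze-and-merge chain\<close>

lemma fm_final_Suc:
  "A \<noteq> {} \<Longrightarrow> fm_final (Suc n) q A F P =
     (\<Sum>K\<in>{K. Coll K \<in> valid_idx (card A)}.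
        q (card A) (Coll K) * (\<Sum>G\<in>collisions A K. fm_final n q (collide A G) F P)
          / real (card (collisions A K)))
     + q (card A) Freeze * (\<Sum>B\<in>A. fm_final n q (A - {B}) (insert B F) P) / real (card A)"
  by (simp add: Let_def)

lemma fm_final_Suc_nonzero_cases:
  assumes "A \<noteq> {}" and "fm_final (Suc k) q A F P \<noteq> 0"
  obtains K G where "G \<in> collisions A K" "fm_final k q (collide A G) F P \<noteq> 0"
    | B where "B \<in> A" "fm_final k q (A - {B}) (insert B F) P \<noteq> 0"
  using assms(2) unfolding fm_final_Suc[OF assms(1)]
  by (metis (no_types, lifting) add.right_neutral divide_eq_0_iff mult_zero_right sum.neutral that)

lemma fm_final_nonneg: "(\<And>b i. 0 \<le> q b i) \<Longrightarrow> 0 \<le> fm_final k q A F P"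
proof (induction k arbitrary: A F)
  case (Suc k)
  show ?case
  proof (cases "A = {}")
    case False
    show ?thesis unfolding fm_final_Suc[OF False]
      by (intro add_nonneg_nonneg sum_nonneg divide_nonneg_nonneg mult_nonneg_nonneg Suc) auto
  qed simp
qed simp

lemma fm_final_local:
  assumes same: "\<And>b. b < N \<Longrightarrow> q1 b = q2 b"
  shows "finite A \<Longrightarrow> card A < N \<Longrightarrow> fm_final k q1 A F P = fm_final k q2 A F P"
proof (induction k arbitrary: A F)
  case (Suc k)
  show ?case
  proof (cases "A = {}")
    case False
    have coll: "fm_final k q1 (collide A G) F P = fm_final k q2 (collide A G) F P"
      if G: "G \<in> collisions A K" for K G
      using Suc.IH[of "collide A G"] finite_collide[OF Suc.prems(1) G]
        card_collide[OF Suc.prems(1) G] Suc.prems(2) size_le_sum_collision[OF Suc.prems(1) G]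
      by simp
    have frz: "fm_final k q1 (A - {B}) (insert B F) P = fm_final k q2 (A - {B}) (insert B F) P" for B
      using Suc.IH Suc.prems by (meson card_Diff1_le finite_Diff le_less_trans)
    show ?thesis
      unfolding fm_final_Suc[OF False] same[OF Suc.prems(2)] using coll frz
      by (simp cong: sum.cong)
  qed simp
qed simp

lemma fm_final_card:
  "finite A \<Longrightarrow> fm_final k q A F P \<noteq> 0 \<Longrightarrow> card P \<le> card A + card F"
proof (induction k arbitrary: A F)
  case 0 thus ?case by (simp split: if_splits)
next
  case (Suc k)
  show ?case
  proof (cases "A = {}")
    case True thus ?thesis using Suc.prems by (simp split: if_splits)
  next
    case False
    from this Suc.prems(2) show ?thesis
    proof (cases rule: fm_final_Suc_nonzero_cases)
      case (1 K G)
      thus ?thesis using Suc.IH[OF finite_collide[OF Suc.prems(1) 1(1)] 1(2)]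
          card_collide[OF Suc.prems(1) 1(1)] size_le_sum_collision[OF Suc.prems(1) 1(1)]
        by linarith
    next
      case (2 B)
      have "card P \<le> card (A - {B}) + card (insert B F)"
        using Suc.IH[of "A - {B}"] 2 Suc.prems(1) by auto
      moreover have "card (insert B F) \<le> card F + 1"
        by (cases "finite F") (auto simp: card_insert_if)
      moreover have "Suc (card (A - {B})) = card A"
        using 2 Suc.prems(1) by (rule_tac card_Suc_Diff1) auto
      ultimately show ?thesis by linarith
    qed
  qed
qed

lemma fm_final_coarsens:
  "fm_final k q A F P \<noteq> 0 \<Longrightarrow> X \<in> A \<union> F \<Longrightarrow> \<exists>Y\<in>P. X \<subseteq> Y"
proof (induction k arbitrary: A F X)
  case 0 thus ?case by (auto split: if_splits)
next
  case (Suc k)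
  show ?case
  proof (cases "A = {}")
    case True thus ?thesis using Suc.prems by (auto split: if_splits)
  next
    case False
    from this Suc.prems(1) show ?thesis
    proof (cases rule: fm_final_Suc_nonzero_cases)
      case (1 K G)
      show ?thesis
      proof (cases "X \<in> \<Union>G")
        case True
        then obtain g where g: "g \<in> G" "X \<in> g" by auto
        have "\<Union>g \<in> collide A G" using g unfolding collide_def by auto
        then obtain Y where "Y \<in> P" "\<Union>g \<subseteq> Y" using Suc.IH[OF 1(2)] by blast
        thus ?thesis using g by blast
      next
        case False
        hence "X \<in> collide A G \<union> F" using Suc.prems(2) unfolding collide_def by auto
        thus ?thesis using Suc.IH[OF 1(2)] by blast
      qed
    next
      case (2 B)
      have "X \<in> (A - {B}) \<union> insert B F" using Suc.prems(2) 2 by auto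
      thus ?thesis using Suc.IH[OF 2(2)] by blast
    qed
  qed
qed

lemma fm_final_freeze_all_pos:
  assumes nonneg: "\<And>b i. 0 \<le> q b i" and freeze_pos: "\<And>b. 1 \<le> b \<Longrightarrow> 0 < q b Freeze"
  shows "finite A \<Longrightarrow> card A \<le> k \<Longrightarrow> 0 < fm_final k q A F (A \<union> F)"
proof (induction k arbitrary: A F)
  case (Suc k)
  show ?case
  proof (cases "A = {}")
    case False
    then obtain B where B: "B \<in> A" by auto
    have "(A - {B}) \<union> insert B F = A \<union> F" using B by auto
    hence "0 < fm_final k q (A - {B}) (insert B F) (A \<union> F)"
      using Suc.IH[of "A - {B}" "insert B F"] Suc.prems B by (simp add: card_Diff1_le)
    moreover have "fm_final k q (A - {B}) (insert B F) (A \<union> F)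
                     \<le> (\<Sum>B\<in>A. fm_final k q (A - {B}) (insert B F) (A \<union> F))"
      by (rule member_le_sum[OF B]) (auto intro: fm_final_nonneg nonneg Suc.prems)
    ultimately have sum_pos: "0 < (\<Sum>B\<in>A. fm_final k q (A - {B}) (insert B F) (A \<union> F))"
      by linarith
    have "0 < card A" using Suc.prems False by auto
    hence "0 < q (card A) Freeze
        * (\<Sum>B\<in>A. fm_final k q (A - {B}) (insert B F) (A \<union> F)) / real (card A)"
      using freeze_pos[of "card A"] sum_pos by simp
    moreover have "0 \<le> (\<Sum>K\<in>{K. Coll K \<in> valid_idx (card A)}.
        q (card A) (Coll K) * (\<Sum>G\<in>collisions A K. fm_final k q (collide A G) F (A \<union> F))
          / real (card (collisions A K)))"
      by (intro sum_nonneg divide_nonneg_nonneg mult_nonneg_nonneg nonneg fm_final_nonneg) auto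
    ultimately show ?thesis unfolding fm_final_Suc[OF False] by linarith
  qed simp
qed simp

section \<open>Partitions and collisions of singletons\<close>

lemma coarsening_card_eq:
  assumes fin_S: "finite S" and cover: "\<Union>S = U" and P: "partition_on U P"
    and inside: "\<forall>X\<in>S. \<exists>Y\<in>P. X \<subseteq> Y" and card_le: "card S \<le> card P"
  shows "S = P"
proof -
  define f where "f X = (SOME Y. Y \<in> P \<and> X \<subseteq> Y)" for X
  have f: "\<And>X. X \<in> S \<Longrightarrow> f X \<in> P \<and> X \<subseteq> f X"
    unfolding f_def using inside by (metis (no_types, lifting) someI_ex)
  have unique: "\<And>Y Z z. Y \<in> P \<Longrightarrow> Z \<in> P \<Longrightarrow> z \<in> Y \<Longrightarrow> z \<in> Z \<Longrightarrow> Y = Z"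
    using partition_onD2[OF P] unfolding disjoint_def by blast
  have "P \<subseteq> f ` S"
  proof
    fix Y assume Y: "Y \<in> P"
    then obtain y where y: "y \<in> Y" using partition_onD3[OF P] by fastforce
    then obtain X where X: "X \<in> S" "y \<in> X" using Y partition_onD1[OF P] cover by blast
    have "f X = Y" using f[OF X(1)] X(2) y Y unique by blast
    thus "Y \<in> f ` S" using X(1) by blast
  qed
  hence image: "f ` S = P" using f by blast
  hence "inj_on f S"
    using card_le card_image_le[OF fin_S, of f] eq_card_imp_inj_on[OF fin_S] by fastforce
  have "f X = X" if X: "X \<in> S" for X
  proof
    show "X \<subseteq> f X" using f[OF X] by blast
    show "f X \<subseteq> X"
    proof
      fix z assume z: "z \<in> f X"
      then obtain X' where X': "X' \<in> S" "z \<in> X'"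
        using f[OF X] partition_onD1[OF P] cover by blast
      have "f X' = f X" using f[OF X'(1)] f[OF X] X'(2) z unique by blast
      thus "z \<in> X" using \<open>inj_on f S\<close> X X' by (metis inj_onD)
    qed
  qed
  thus ?thesis using image by simp
qed

definition singletons :: "nat \<Rightarrow> nat set set" where
  "singletons n = (\<lambda>i. {i}) ` {1..n}"

lemma finite_singletons: "finite (singletons n)"
  by (simp add: singletons_def)

lemma card_singletons: "card (singletons n) = n"
  by (simp add: singletons_def card_image inj_on_def)

lemma partition_singletons: "partition_on {1..n} (singletons n)"
  unfolding singletons_def by (rule partition_on_singletons)

lemma set_of_singletons: "g \<subseteq> range (\<lambda>i. {i}) \<Longrightarrow> g = (\<lambda>i. {i}) ` \<Union>g"
  by blast

lemma card_Union_singletons: "g \<subseteq> range (\<lambda>i. {i}) \<Longrightarrow> card (\<Union>g) = card g"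
  by (subst (2) set_of_singletons) (auto simp: card_image inj_on_def)

lemma singletons_range: "singletons n \<subseteq> range (\<lambda>i. {i})"
  by (auto simp: singletons_def)

definition big_block_type :: "nat set set \<Rightarrow> nat multiset" where
  "big_block_type P = image_mset card (mset_set {Y\<in>P. 2 \<le> card Y})"

lemma big_block_type_collide:
  assumes G: "G \<in> collisions (singletons n) K"
  shows "big_block_type (collide (singletons n) G) = K"
proof -
  have GA: "G \<subseteq> Pow (singletons n)" and ge2: "\<forall>g\<in>G. 2 \<le> card g"
    and K: "image_mset card (mset_set G) = K" using G by (auto simp: collisions_def)
  have sing: "g \<subseteq> range (\<lambda>i. {i})" if "g \<in> G" for g
    using that GA singletons_range by blast
  have card_U: "card (\<Union>g) = card g" if "g \<in> G" for g
    using sing[OF that] by (rule card_Union_singletons)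
  have big: "{Y\<in>collide (singletons n) G. 2 \<le> card Y} = Union ` G"
    using card_U ge2 unfolding collide_def by (force simp: singletons_def)
  have "inj_on Union G"
    by (rule inj_onI) (metis sing set_of_singletons)
  hence "image_mset card (mset_set (Union ` G)) = image_mset (card \<circ> Union) (mset_set G)"
    by (simp add: image_mset_mset_set[symmetric] multiset.map_comp)
  also have "\<dots> = image_mset card (mset_set G)"
    using card_U finite_collision_groups[OF finite_singletons G]
    by (intro image_mset_cong) auto
  finally show ?thesis using big K by (simp add: big_block_type_def)
qed

lemma small_block_singleton:
  fixes P :: "nat set set"
  assumes P: "partition_on {1..n} P" and Y: "Y \<in> P" "\<not> 2 \<le> card Y"
  obtains i where "Y = {i}" "i \<in> {1..n}"
proof -
  have sub: "Y \<subseteq> {1..n}" using Y(1) partition_onD1[OF P] by blast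
  hence "finite Y" by (rule finite_subset) simp
  moreover have "Y \<noteq> {}" using Y(1) partition_onD3[OF P] by blast
  ultimately have "0 < card Y" by (simp add: card_gt_0_iff)
  hence "card Y = 1" using Y(2) by linarith
  thus ?thesis using that sub by (metis card_1_singletonE insert_subset)
qed

lemma partition_as_collision:
  fixes P :: "nat set set"
  assumes P: "partition_on {1..n} P"
  defines "G \<equiv> (\<lambda>Y. (\<lambda>i. {i}) ` Y) ` {Y\<in>P. 2 \<le> card Y}"
  shows "G \<in> collisions (singletons n) (big_block_type P)" "collide (singletons n) G = P"
proof -
  let ?s = "\<lambda>Y. (\<lambda>i::nat. {i}) ` Y"
  let ?big = "{Y\<in>P. 2 \<le> card Y}"
  have sub: "Y \<subseteq> {1..n}" if "Y \<in> P" for Y using that partition_onD1[OF P] by blast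
  have card_s: "card (?s Y) = card Y" for Y by (simp add: card_image inj_on_def)
  have unique: "Y = Z" if "Y \<in> P" "Z \<in> P" "z \<in> Y" "z \<in> Z" for Y Z z
    using partition_onD2[OF P] that unfolding disjoint_def by blast
  have inj: "inj_on ?s ?big" by (intro inj_onI) (auto simp: inj_image_eq_iff inj_on_def)
  have groups: "G \<subseteq> Pow (singletons n)" unfolding G_def singletons_def using sub by blast
  have ge2: "\<forall>g\<in>G. 2 \<le> card g" unfolding G_def using card_s by auto
  have disj: "disjoint G"
  proof (rule disjointI)
    fix a b assume "a \<in> G" "b \<in> G" "a \<noteq> b"
    then obtain Y Z where "Y \<in> P" "Z \<in> P" "a = ?s Y" "b = ?s Z" "Y \<noteq> Z"
      unfolding G_def by auto
    thus "a \<inter> b = {}" using unique by auto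
  qed
  have "image_mset card (mset_set G) = image_mset (card \<circ> ?s) (mset_set ?big)"
    unfolding G_def by (simp add: image_mset_mset_set[OF inj, symmetric] multiset.map_comp)
  hence "image_mset card (mset_set G) = big_block_type P"
    by (simp add: big_block_type_def card_s o_def)
  thus "G \<in> collisions (singletons n) (big_block_type P)"
    using groups ge2 disj by (simp add: collisions_def)
  have kept: "singletons n - \<Union>G = P - ?big"
  proof (intro equalityI subsetI)
    fix X assume X: "X \<in> singletons n - \<Union>G"
    then obtain i where i: "X = {i}" "i \<in> {1..n}" by (auto simp: singletons_def)
    then obtain Y where Y: "Y \<in> P" "i \<in> Y" using partition_onD1[OF P] by blast
    have small: "\<not> 2 \<le> card Y" using X Y i unfolding G_def by blast
    obtain j where "Y = {j}" using small_block_singleton[OF P Y(1) small] by blast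
    thus "X \<in> P - ?big" using Y i small by auto
  next
    fix Y assume Y: "Y \<in> P - ?big"
    then obtain i where i: "Y = {i}" "i \<in> {1..n}" using small_block_singleton[OF P] by blast
    have "{i} \<notin> ?s Z" if "Z \<in> ?big" for Z using unique[of Y Z i] Y i that by auto
    hence "{i} \<notin> \<Union>G" unfolding G_def by blast
    thus "Y \<in> singletons n - \<Union>G" using i by (auto simp: singletons_def)
  qed
  have merged: "Union ` G = ?big" unfolding G_def by (auto simp: image_image)
  show "collide (singletons n) G = P" unfolding collide_def kept merged by auto
qed

section \<open>Partitions given by compositions\<close>

lemma comp_blocks_Cons:
  "comp_blocks (x # c) = insert {1..x} ((`) ((+) x) ` comp_blocks c)"
proof -
  have "[0..<length (x # c)] = 0 # map Suc [0..<length c]"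
    by (simp add: map_Suc_upt upt_conv_Cons del: upt_Suc)
  thus ?thesis unfolding comp_blocks_def by (simp add: image_image add.commute)
qed

lemma comp_blocks_partition:
  "\<forall>x\<in>set c. 0 < x \<Longrightarrow> partition_on {1..sum_list c} (comp_blocks c)"
proof (induction c)
  case Nil thus ?case by (simp add: comp_blocks_def partition_on_empty)
next
  case (Cons x c)
  let ?S = "(`) ((+) x) ` comp_blocks c"
  have IH: "partition_on {1..sum_list c} (comp_blocks c)" using Cons by simp
  have "partition_on ((+) x ` {1..sum_list c}) (?S - {{}})"
    by (rule partition_on_inj_image[OF IH]) simp
  moreover have "{} \<notin> ?S" using partition_onD3[OF IH] by auto
  ultimately have shifted: "partition_on {x+1..x + sum_list c} ?S" by (simp add: add.commute)
  have "disjnt {1..x} (\<Union>?S)" using partition_onD1[OF shifted, symmetric]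
    by (simp add: disjnt_def)
  moreover have "{1..x + sum_list c} - {1..x} = {x+1..x + sum_list c}" by auto
  ultimately show ?case using shifted Cons.prems
    by (simp add: comp_blocks_Cons partition_on_insert)
qed

lemma comp_blocks_sizes:
  "\<forall>x\<in>set c. 0 < x \<Longrightarrow> image_mset card (mset_set (comp_blocks c)) = mset c"
proof (induction c)
  case Nil thus ?case by (simp add: comp_blocks_def)
next
  case (Cons x c)
  let ?sh = "(`) ((+) x)"
  have part: "partition_on {1..sum_list c} (comp_blocks c)"
    using Cons.prems by (intro comp_blocks_partition) simp
  have fin: "finite (comp_blocks c)" using finite_elements[OF _ part] by simp
  have inj: "inj_on ?sh (comp_blocks c)" by (intro inj_onI) (simp add: inj_image_eq_iff)
  have "1 \<notin> ?sh Y" if "Y \<in> comp_blocks c" for Y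
  proof -
    have "Y \<subseteq> {1..sum_list c}" using that partition_onD1[OF part] by blast
    thus ?thesis using Cons.prems by auto
  qed
  moreover have "1 \<in> {1..x}" using Cons.prems by simp
  ultimately have new: "{1..x} \<notin> ?sh ` comp_blocks c" by blast
  have "mset_set (comp_blocks (x # c)) = add_mset {1..x} (mset_set (?sh ` comp_blocks c))"
    using fin new by (simp add: comp_blocks_Cons)
  moreover have "image_mset card (mset_set (?sh ` comp_blocks c)) = image_mset card (mset_set (comp_blocks c))"
    by (simp add: image_mset_mset_set[OF inj, symmetric] multiset.map_comp o_def card_image)
  moreover have "image_mset card (mset_set (comp_blocks c)) = mset c"
    using Cons.IH Cons.prems by simp
  ultimately show ?case by simp
qed

lemma comp_blocks_ones: "comp_blocks (replicate n 1) = singletons n"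
proof -
  have blocks: "comp_blocks (replicate n 1) = (\<lambda>j. {j+1}) ` {0..<n}"
    unfolding comp_blocks_def by (auto simp: take_replicate sum_list_replicate min_def)
  have shift: "{1..n} = Suc ` {0..<n}"
    by (simp add: image_Suc_atLeastLessThan atLeastLessThanSuc_atLeastAtMost)
  show ?thesis unfolding blocks singletons_def shift image_image by simp
qed

definition type_comp :: "nat multiset \<Rightarrow> nat \<Rightarrow> nat list" where
  "type_comp K n = sorted_list_of_multiset K @ replicate (n - sum_mset K) 1"

lemma type_comp_props:
  assumes K: "K \<in> coll_types n"
  shows "type_comp K n \<in> compositions" "sum_list (type_comp K n) = n"
    "partition_on {1..n} (comp_blocks (type_comp K n))"
    "card (comp_blocks (type_comp K n)) = size K + (n - sum_mset K)"
    "big_block_type (comp_blocks (type_comp K n)) = K"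
proof -
  let ?c = "type_comp K n"
  have ge2: "\<forall>k\<in>#K. 2 \<le> k" and sum: "sum_mset K \<le> n" using K by (auto simp: coll_types_def)
  have ms: "mset ?c = K + replicate_mset (n - sum_mset K) 1" by (simp add: type_comp_def)
  have pos: "\<forall>x\<in>set ?c. 0 < x"
    using ge2 by (auto simp: type_comp_def)
  thus "?c \<in> compositions" by (simp add: compositions_def)
  have "sum_list ?c = sum_mset (mset ?c)" by (simp add: sum_mset_sum_list)
  thus sum_c: "sum_list ?c = n" unfolding ms using sum by simp
  show part: "partition_on {1..n} (comp_blocks ?c)" using comp_blocks_partition[OF pos] sum_c by simp
  have sizes: "image_mset card (mset_set (comp_blocks ?c)) = mset ?c"
    by (rule comp_blocks_sizes[OF pos])
  have "card (comp_blocks ?c) = size (image_mset card (mset_set (comp_blocks ?c)))" by simp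
  thus "card (comp_blocks ?c) = size K + (n - sum_mset K)" unfolding sizes ms by simp
  have fin: "finite (comp_blocks ?c)" using finite_elements[OF _ part] by simp
  have "big_block_type (comp_blocks ?c) = filter_mset (\<lambda>k. 2 \<le> k) (mset ?c)"
    using fin unfolding big_block_type_def sizes[symmetric]
    by (simp add: image_mset_filter_mset_swap[symmetric])
  moreover have "filter_mset (\<lambda>k. 2 \<le> k) K = K" using ge2 by (simp add: filter_mset_eq_conv)
  moreover have "filter_mset (\<lambda>k. 2 \<le> k) (replicate_mset m (1::nat)) = {#}" for m
    by (induction m) auto
  ultimately show "big_block_type (comp_blocks ?c) = K" unfolding ms by simp
qed

section \<open>Positivity of freezing on Q\<close>

lemma in_QD:
  assumes "in_Q q"
  shows "q 0 = (\<lambda>_. 0)" "1 \<le> b \<Longrightarrow> coeff_family b (q b)" "1 \<le> b \<Longrightarrow> BR2 q b"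
    "0 < q 2 Freeze"
  using assms unfolding in_Q_def by auto

lemma Q_nonneg:
  assumes Q: "in_Q q" shows "0 \<le> q b i"
proof (cases "b = 0")
  case True thus ?thesis using in_QD(1)[OF Q] by simp
next
  case False
  hence "coeff_family b (q b)" using in_QD(2)[OF Q] by simp
  thus ?thesis by (cases "i \<in> valid_idx b") (auto simp: coeff_family_def)
qed

lemma Q_le_1:
  assumes Q: "in_Q q" and b: "1 \<le> b" and i: "i \<in> valid_idx b"
  shows "q b i \<le> 1"
proof -
  have "q b i \<le> (\<Sum>j\<in>valid_idx b. q b j)"
    using member_le_sum[OF i] Q_nonneg[OF Q] finite_valid_idx by blast
  moreover have "coeff_family b (q b)" using in_QD(2)[OF Q b] .
  ultimately show ?thesis by (simp add: coeff_family_def)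
qed

lemma valid_idx_1: "valid_idx 1 = {Freeze}"
proof -
  have "\<not> sum_mset K \<le> 1" if ne: "K \<noteq> {#}" and ge2: "\<forall>k\<in>#K. 2 \<le> k" for K :: "nat multiset"
  proof -
    obtain k where "k \<in># K" "2 \<le> k" using ne ge2 by (metis multiset_nonemptyE)
    moreover hence "k \<le> sum_mset K" using sum_mset.remove by fastforce
    ultimately show ?thesis by linarith
  qed
  thus ?thesis by (auto simp: valid_idx_def)
qed

text \<open>BR2 propagates positivity of freezing from level m to level m+1: if
  q(m+1:1) = 0, BR2 would read q(m:1) = 2 q(m+1:2;m-1)/(m+1) q(m:1) with a factor
  smaller than 1.\<close>
lemma BR2_freeze_pos_step:
  assumes BR2: "BR2 q m" and m: "2 \<le> m" and coll: "0 \<le> q (Suc m) (Coll {#2#})" "q (Suc m) (Coll {#2#}) \<le> 1"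
    and next_nonneg: "0 \<le> q (Suc m) Freeze" and pos: "0 < q m Freeze"
  shows "0 < q (Suc m) Freeze"
proof (rule ccontr)
  assume "\<not> 0 < q (Suc m) Freeze"
  hence "q (Suc m) Freeze = 0" using next_nonneg by linarith
  hence eq: "q m Freeze = 2 * q (Suc m) (Coll {#2#}) / real (Suc m) * q m Freeze"
    using BR2 by (simp add: BR2_def)
  have "2 * q (Suc m) (Coll {#2#}) / real (Suc m) < 1" using coll m by (simp add: field_simps)
  hence "2 * q (Suc m) (Coll {#2#}) / real (Suc m) * q m Freeze < 1 * q m Freeze"
    using pos by (intro mult_strict_right_mono) auto
  thus False using eq by linarith
qed

lemma Q_freeze_pos: "in_Q q \<Longrightarrow> 1 \<le> b \<Longrightarrow> 0 < q b Freeze"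
proof -
  assume Q: "in_Q q" and b: "1 \<le> b"
  have "coeff_family 1 (q 1)" using in_QD(2)[OF Q] by simp
  hence "q 1 Freeze = 1" unfolding coeff_family_def valid_idx_1 by simp
  moreover have "0 < q b Freeze" if "2 \<le> b" for b
    using that
  proof (induction b rule: dec_induct)
    case base show ?case using in_QD(4)[OF Q] .
  next
    case (step m)
    have "Coll {#2#} \<in> valid_idx (Suc m)" using step.hyps by (auto simp: valid_idx_def)
    hence "q (Suc m) (Coll {#2#}) \<le> 1" using Q_le_1[OF Q] by simp
    moreover have "BR2 q m" using in_QD(3)[OF Q] step.hyps by simp
    ultimately show ?case
      using BR2_freeze_pos_step step.hyps step.IH Q_nonneg[OF Q] by blast
  qed
  ultimately show ?thesis using b by (cases "b = 1") auto
qed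

section \<open>The first step of the chain\<close>

definition after_collision ::
    "(nat \<Rightarrow> cidx \<Rightarrow> real) \<Rightarrow> nat \<Rightarrow> nat multiset \<Rightarrow> nat set set \<Rightarrow> real" where
  "after_collision q n K P =
     (\<Sum>G\<in>collisions (singletons n) K. fm_final (n-1) q (collide (singletons n) G) {} P)
       / real (card (collisions (singletons n) K))"

definition after_freeze :: "(nat \<Rightarrow> cidx \<Rightarrow> real) \<Rightarrow> nat \<Rightarrow> nat set set \<Rightarrow> real" where
  "after_freeze q n P = (\<Sum>B\<in>singletons n. fm_final (n-1) q (singletons n - {B}) {B} P) / real n"

lemma prob_E_first_step:
  assumes n: "1 \<le> n"
  shows "prob_E q n P = (\<Sum>K\<in>coll_types n. q n (Coll K) * after_collision q n K P)
                         + q n Freeze * after_freeze q n P"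
proof -
  have nonempty: "singletons n \<noteq> {}" using n by (auto simp: singletons_def)
  have "prob_E q n P = fm_final (Suc (n-1)) q (singletons n) {} P"
    using n by (simp add: prob_E_def singletons_def)
  also have "\<dots> = (\<Sum>K\<in>coll_types n. q n (Coll K) * after_collision q n K P)
                   + q n Freeze * after_freeze q n P"
    unfolding fm_final_Suc[OF nonempty] card_singletons after_collision_def after_freeze_def
    using n by (simp add: coll_types_eq times_divide_eq_right)
  finally show ?thesis .
qed

text \<open>After the first step fewer than n blocks are active, so the after-step
  probabilities only depend on the levels below n.\<close>
lemma after_collision_local:
  assumes same: "\<And>b. b < n \<Longrightarrow> q1 b = q2 b" and K: "K \<in> coll_types n"
  shows "after_collision q1 n K P = after_collision q2 n K P"
proof -
  have "fm_final (n-1) q1 (collide (singletons n) G) {} P = fm_final (n-1) q2 (collide (singletons n) G) {} P"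
    if G: "G \<in> collisions (singletons n) K" for G
  proof (rule fm_final_local[OF same finite_collide[OF finite_singletons G]])
    show "card (collide (singletons n) G) < n"
      using card_collide[OF finite_singletons G] size_less_sum_coll_type[OF K] card_singletons[of n]
      by linarith
  qed
  thus ?thesis unfolding after_collision_def by (simp cong: sum.cong)
qed

lemma after_freeze_local:
  assumes same: "\<And>b. b < n \<Longrightarrow> q1 b = q2 b" and n: "1 \<le> n"
  shows "after_freeze q1 n P = after_freeze q2 n P"
proof -
  have "fm_final (n-1) q1 (singletons n - {B}) {B} P = fm_final (n-1) q2 (singletons n - {B}) {B} P"
    if B: "B \<in> singletons n" for B
  proof (rule fm_final_local[OF same])
    show "finite (singletons n - {B})" by (simp add: finite_singletons)
    show "card (singletons n - {B}) < n"
      using n B by (simp add: card_Diff_singleton card_singletons)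
  qed
  thus ?thesis unfolding after_freeze_def by (simp cong: sum.cong)
qed

lemma after_collision_support:
  assumes P: "partition_on {1..n} P" and K: "K \<in> coll_types n"
    and nonzero: "after_collision q n K P \<noteq> 0"
  shows "card P + sum_mset K \<le> n + size K"
    and "n + size K \<le> card P + sum_mset K \<Longrightarrow> big_block_type P = K"
proof -
  have "(\<Sum>G\<in>collisions (singletons n) K. fm_final (n-1) q (collide (singletons n) G) {} P) \<noteq> 0"
    using nonzero unfolding after_collision_def by auto
  then obtain G where G: "G \<in> collisions (singletons n) K"
    and F: "fm_final (n-1) q (collide (singletons n) G) {} P \<noteq> 0"
    using sum.not_neutral_contains_not_neutral by blast
  let ?S = "collide (singletons n) G"
  have fin_S: "finite ?S" using finite_collide[OF finite_singletons G] .
  have card_P: "card P \<le> card ?S" using fm_final_card[OF fin_S F] by simp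
  have card_S: "card ?S + sum_mset K \<le> n + size K"
    using card_collide[OF finite_singletons G] by (simp add: card_singletons)
  show "card P + sum_mset K \<le> n + size K" using card_P card_S by linarith
  assume "n + size K \<le> card P + sum_mset K"
  hence card_le: "card ?S \<le> card P" using card_S by linarith
  have "\<Union>G \<subseteq> singletons n" using G by (auto simp: collisions_def)
  hence cover: "\<Union>?S = {1..n}"
    using Union_collide partition_onD1[OF partition_singletons] by metis
  have inside: "\<forall>X\<in>?S. \<exists>Y\<in>P. X \<subseteq> Y" using fm_final_coarsens[OF F] by blast
  have "?S = P" using coarsening_card_eq[OF fin_S cover P inside card_le] .
  thus "big_block_type P = K" using big_block_type_collide[OF G] by simp
qed

lemma after_freeze_pos:
  assumes Q: "in_Q q" and n: "1 \<le> n"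
  shows "0 < after_freeze q n (singletons n)"
proof -
  have "0 < fm_final (n-1) q (singletons n - {B}) {B} (singletons n)"
    if B: "B \<in> singletons n" for B
  proof -
    have "(singletons n - {B}) \<union> {B} = singletons n" using B by auto
    thus ?thesis
      using fm_final_freeze_all_pos[of q, OF Q_nonneg[OF Q] Q_freeze_pos[OF Q],
          of "singletons n - {B}" "n-1" "{B}"] B
      by (simp add: finite_singletons card_singletons)
  qed
  hence "0 < (\<Sum>B\<in>singletons n. fm_final (n-1) q (singletons n - {B}) {B} (singletons n))"
    using n by (intro sum_pos finite_singletons) (auto simp: singletons_def)
  thus ?thesis unfolding after_freeze_def using n by simp
qed

text \<open>A partition P of [n] with fewer than n blocks is reached with positive
  probability after the collision producing it, by freezing all blocks.\<close>
lemma after_collision_pos: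
  assumes Q: "in_Q q" and P: "partition_on {1..n} P" and fewer: "card P < n"
  shows "0 < after_collision q n (big_block_type P) P"
proof -
  let ?G = "(\<lambda>Y. (\<lambda>i. {i}) ` Y) ` {Y\<in>P. 2 \<le> card Y}"
  have G: "?G \<in> collisions (singletons n) (big_block_type P)"
    and result: "collide (singletons n) ?G = P"
    using partition_as_collision[OF P] by auto
  have "0 < fm_final (n-1) q (collide (singletons n) ?G) {} P"
    using fm_final_freeze_all_pos[of q, OF Q_nonneg[OF Q] Q_freeze_pos[OF Q], of P "n-1" "{}"]
      result finite_elements[OF _ P] fewer by simp
  moreover have "fm_final (n-1) q (collide (singletons n) ?G) {} P \<le>
      (\<Sum>G\<in>collisions (singletons n) (big_block_type P). fm_final (n-1) q (collide (singletons n) G) {} P)"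
    by (rule member_le_sum[OF G])
      (auto intro: fm_final_nonneg Q_nonneg[OF Q] finite_collisions finite_singletons)
  moreover have "0 < card (collisions (singletons n) (big_block_type P))"
    using G finite_collisions[OF finite_singletons] card_gt_0_iff by blast
  ultimately show ?thesis unfolding after_collision_def by simp
qed

section \<open>Identification of the coefficients level by level\<close>

lemma first_step_difference:
  assumes n: "1 \<le> n" and same: "\<And>b. b < n \<Longrightarrow> q1 b = q2 b"
    and prob: "prob_E q1 n P = prob_E q2 n P"
  shows "(\<Sum>K\<in>coll_types n. (q1 n (Coll K) - q2 n (Coll K)) * after_collision q1 n K P)
           + (q1 n Freeze - q2 n Freeze) * after_freeze q1 n P = 0"
proof -
  have "(\<Sum>K\<in>coll_types n. q2 n (Coll K) * after_collision q2 n K P)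
      = (\<Sum>K\<in>coll_types n. q2 n (Coll K) * after_collision q1 n K P)"
    using after_collision_local[OF same] by simp
  moreover have "after_freeze q2 n P = after_freeze q1 n P"
    using after_freeze_local[OF same n] by simp
  ultimately show ?thesis
    using prob unfolding prob_E_first_step[OF n]
    by (simp add: left_diff_distrib sum_subtractf)
qed

text \<open>Testing on the all-singletons partition, which no collision can reach,
  identifies the freezing coefficient.\<close>
lemma freeze_coeff_agrees:
  assumes Q1: "in_Q q1" and n: "1 \<le> n" and same: "\<And>b. b < n \<Longrightarrow> q1 b = q2 b"
    and prob: "prob_E q1 n (singletons n) = prob_E q2 n (singletons n)"
  shows "q1 n Freeze = q2 n Freeze"
proof -
  have "after_collision q1 n K (singletons n) = 0" if K: "K \<in> coll_types n" for K
    using after_collision_support(1)[OF partition_singletons K] size_less_sum_coll_type[OF K]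
    by (fastforce simp: card_singletons)
  hence "(q1 n Freeze - q2 n Freeze) * after_freeze q1 n (singletons n) = 0"
    using first_step_difference[OF n same prob] by simp
  thus ?thesis using after_freeze_pos[OF Q1 n] by simp
qed

text \<open>Testing on the partition of type K identifies q(n:K; n - sum K), by
  induction on the number sum K - size K of blocks the collision removes:
  collision types removing fewer blocks are already identified, and those
  removing at least as many cannot reach this partition unless they equal K.\<close>
lemma coll_coeff_agrees:
  assumes Q1: "in_Q q1" and n: "1 \<le> n" and same: "\<And>b. b < n \<Longrightarrow> q1 b = q2 b"
    and prob: "\<And>c. c \<in> compositions \<Longrightarrow> sum_list c = n \<Longrightarrow>
                  prob_E q1 n (comp_blocks c) = prob_E q2 n (comp_blocks c)"
    and freeze: "q1 n Freeze = q2 n Freeze"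
  shows "K \<in> coll_types n \<Longrightarrow> q1 n (Coll K) = q2 n (Coll K)"
proof (induction K rule: measure_induct_rule[of "\<lambda>K. sum_mset K - size K"])
  case (less K)
  let ?D = "\<lambda>K. q1 n (Coll K) - q2 n (Coll K)"
  let ?P = "comp_blocks (type_comp K n)"
  have K: "K \<in> coll_types n" by fact
  note props = type_comp_props[OF K]
  have sum: "sum_mset K \<le> n" using K by (simp add: coll_types_def)
  have removes: "size K < sum_mset K" using size_less_sum_coll_type[OF K] .
  have others: "?D K' * after_collision q1 n K' ?P = 0" if K': "K' \<in> coll_types n - {K}" for K'
  proof (cases "sum_mset K' - size K' < sum_mset K - size K")
    case True thus ?thesis using less.IH K' by simp
  next
    case False
    have K'_type: "K' \<in> coll_types n" using K' by blast
    have "size K' < sum_mset K'" using size_less_sum_coll_type[OF K'_type] .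
    hence "n + size K' \<le> card ?P + sum_mset K'"
      using False props(4) sum removes by linarith
    hence "K' = K" if "after_collision q1 n K' ?P \<noteq> 0"
      using after_collision_support(2)[OF props(3) K'_type that] props(5) by simp
    thus ?thesis using K' by auto
  qed
  have "(\<Sum>K'\<in>coll_types n. ?D K' * after_collision q1 n K' ?P)
      = ?D K * after_collision q1 n K ?P + (\<Sum>K'\<in>coll_types n - {K}. ?D K' * after_collision q1 n K' ?P)"
    by (rule sum.remove[OF finite_coll_types K])
  also have "(\<Sum>K'\<in>coll_types n - {K}. ?D K' * after_collision q1 n K' ?P) = 0"
    using others by (intro sum.neutral) blast
  finally have "?D K * after_collision q1 n K ?P = 0"
    using first_step_difference[OF n same prob[OF props(1,2)]] freeze by simp
  moreover have "0 < after_collision q1 n K ?P"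
    using after_collision_pos[OF Q1 props(3)] props(4,5) removes sum by simp
  ultimately show ?case by simp
qed

lemma level_agrees:
  assumes Q1: "in_Q q1" and Q2: "in_Q q2" and n: "1 \<le> n"
    and same: "\<And>b. b < n \<Longrightarrow> q1 b = q2 b"
    and eppf: "\<And>c. c \<in> compositions \<Longrightarrow> eppf q1 c = eppf q2 c"
  shows "q1 n = q2 n"
proof
  have prob: "prob_E q1 n (comp_blocks c) = prob_E q2 n (comp_blocks c)"
    if "c \<in> compositions" "sum_list c = n" for c
    using eppf[OF that(1)] that(2) by (simp add: eppf_def)
  have "replicate n 1 \<in> compositions" "sum_list (replicate n (1::nat)) = n"
    by (simp_all add: compositions_def sum_list_replicate)
  hence "prob_E q1 n (singletons n) = prob_E q2 n (singletons n)"
    using prob comp_blocks_ones by metis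
  hence freeze: "q1 n Freeze = q2 n Freeze" using freeze_coeff_agrees[OF Q1 n same] by blast
  fix i show "q1 n i = q2 n i"
  proof (cases i)
    case (Coll K)
    show ?thesis
    proof (cases "K \<in> coll_types n")
      case True
      have "q1 n (Coll K) = q2 n (Coll K)" by (rule coll_coeff_agrees[OF Q1 n same prob freeze True])
      thus ?thesis using Coll by simp
    next
      case False
      hence "i \<notin> valid_idx n" using Coll coll_types_eq[of n] n by auto
      thus ?thesis using in_QD(2)[OF Q1 n] in_QD(2)[OF Q2 n] by (simp add: coeff_family_def)
    qed
  qed (simp add: freeze)
qed

theorem lemma6p3:
  "inj_on (\<lambda>q. restrict (eppf q) compositions) {q. in_Q q}"
proof (rule inj_onI)
  fix q1 q2 assume "q1 \<in> {q. in_Q q}" "q2 \<in> {q. in_Q q}"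
    and h: "restrict (eppf q1) compositions = restrict (eppf q2) compositions"
  hence Q1: "in_Q q1" and Q2: "in_Q q2" by auto
  have eppf: "eppf q1 c = eppf q2 c" if "c \<in> compositions" for c
    using fun_cong[OF h, of c] that by simp
  have "q1 n = q2 n" for n
  proof (induction n rule: less_induct)
    case (less n)
    show ?case
    proof (cases "n = 0")
      case True thus ?thesis using in_QD(1)[OF Q1] in_QD(1)[OF Q2] by simp
    next
      case False thus ?thesis using level_agrees[OF Q1 Q2 _ less.IH eppf] by simp
    qed
  qed
  thus "q1 = q2" by (rule ext)
qed

end
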